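(* Let $(X,\sigma)$ be a one-sided or two-sided subshift over a finite alphabet which has a forward Li-Yorke pair $x,y$. Then there exists $f\in E(X,\mathbb{Z}^+)$ such that $f(x)\neq f(y)$ but $f(x)$ and $f(y)$ are forward asymptotic. In particular, $f$ is not injective on its image and therefore $f$ is not a completely regular element of $X^X$.
   Context: For a finite alphabet $\mathcal A$, a one-sided (resp. two-sided) subshift is a closed subset $X\subset\mathcal A^{\mathbb{Z}^+}$ (resp. $\mathcal A^{\mathbb{Z}}$), product topology, invariant under the left shift $\sigma(x)_n=x_{n+1}$, with $\sigma$ restricted to $X$. $E(X,\mathbb{Z}^+)$ is the closure of $\{\sigma^n:n\ge0\}$ in $X^X$ (pointwise convergence topology, composition). Fix a compatible metric $d$. A pair is forward asymptotic if $\lim_{n\to+\infty}d(\sigma^nx,\sigma^ny)=0$, forward proximal if $\inf_{n\ge0}d(\sigma^nx,\sigma^ny)=0$, and a forward Li-Yorke pair if forward proximal but not forward asymptotic. An element $f$ of a semigroup is completely regular if there exists $g$ in it with $f=fgf$ and $fg=gf$. *)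

theory Defs
  imports "HOL-Analysis.Analysis"
begin

text \<open>Points of a full shift: functions from the index set (nat = Z+ for one-sided,
int = Z for two-sided) to the alphabet.  The alphabet is a finite set of natural
numbers; nat carries the discrete topology, and the function space carries the
product topology (library instance), with the library's compatible metric
(Function_Metric).\<close>

definition shift :: "('i::{plus,one} \<Rightarrow> 'a) \<Rightarrow> ('i \<Rightarrow> 'a)" where
  "shift x = (\<lambda>n. x (n + 1))"

definition subshift :: "nat set \<Rightarrow> ('i::{plus,one} \<Rightarrow> nat) set \<Rightarrow> bool" where
  "subshift A X \<longleftrightarrow> finite A \<and> X \<subseteq> {x. \<forall>n. x n \<in> A} \<and> closed X \<and> shift ` X \<subseteq> X"

definition fwd_asymptotic :: "('i::{countable,plus,one} \<Rightarrow> nat) \<Rightarrow> ('i \<Rightarrow> nat) \<Rightarrow> bool" where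
  "fwd_asymptotic x y \<longleftrightarrow> (\<lambda>n. dist ((shift ^^ n) x) ((shift ^^ n) y)) \<longlonglongrightarrow> 0"

definition fwd_proximal :: "('i::{countable,plus,one} \<Rightarrow> nat) \<Rightarrow> ('i \<Rightarrow> nat) \<Rightarrow> bool" where
  "fwd_proximal x y \<longleftrightarrow> (INF n. dist ((shift ^^ n) x) ((shift ^^ n) y)) = 0"

definition fwd_li_yorke :: "('i::{countable,plus,one} \<Rightarrow> nat) \<Rightarrow> ('i \<Rightarrow> nat) \<Rightarrow> bool" where
  "fwd_li_yorke x y \<longleftrightarrow> fwd_proximal x y \<and> \<not> fwd_asymptotic x y"

text \<open>Enveloping semigroup E(X,Z+): closure of {sigma^n restricted to X} in X^X with the
topology of pointwise convergence (product topology).  Maps X -> X are represented as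
extensional functions on X.\<close>
definition enveloping_semigroup ::
  "('i::{plus,one} \<Rightarrow> nat) set \<Rightarrow> (('i \<Rightarrow> nat) \<Rightarrow> ('i \<Rightarrow> nat)) set" where
  "enveloping_semigroup X =
     (product_topology (\<lambda>_. top_of_set X) X) closure_of {restrict (shift ^^ n) X | n. True}"

definition completely_regular_map :: "'b set \<Rightarrow> ('b \<Rightarrow> 'b) \<Rightarrow> bool" where
  "completely_regular_map X f \<longleftrightarrow>
     (\<exists>g \<in> X \<rightarrow>\<^sub>E X. compose X f (compose X g f) = f \<and> compose X f g = compose X g f)"

end

theory Submission
  imports Defs
begin

text \<open>Since x and y are proximal but not asymptotic, for every k there is a time t k \<ge> k at
which x and y differ while agreeing at the k following times. A cluster point f of the maps
\<sigma>^(t k) in X^X then separates x and y at coordinate 0, while f x and f y agree at all positive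
coordinates and are therefore asymptotic. The same eventual agreement makes every \<sigma>^(t k) with k
large identify f x and f y, hence f (f x) = f (f y) although f x \<noteq> f y; this rules out both
injectivity of f on its image and complete regularity.\<close>

class shift_index = semiring_1 + countable +
  assumes eventually_translate_in_nat: "\<forall>\<^sub>F n in sequentially. \<exists>m\<ge>N. i + of_nat n = of_nat m"

instance nat :: shift_index
proof
  fix i N :: nat
  show "\<forall>\<^sub>F n in sequentially. \<exists>m\<ge>N. i + of_nat n = of_nat m"
    unfolding eventually_sequentially by (rule exI[of _ N]) auto
qed

instance int :: shift_index
proof
  fix i :: int and N :: nat
  show "\<forall>\<^sub>F n in sequentially. \<exists>m\<ge>N. i + of_nat n = of_nat m"
    unfolding eventually_sequentially
    by (rule exI[of _ "N + nat (- i)"], intro allI impI, rule exI[of _ "nat (i + int _)"]) auto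
qed

lemma funpow_shift: "(shift ^^ n) x = (\<lambda>i. x (i + of_nat n))"
  for x :: "'i::semiring_1 \<Rightarrow> 'a"
  by (induction n) (auto simp: shift_def add_ac)

text \<open>The type nat is not a metric space: the distance of two sequences in Defs is the
distance of their coercions to real-valued sequences.\<close>

lemma dist_fun_nat_ge:
  fixes u v :: "'i::countable \<Rightarrow> nat"
  assumes "u i \<noteq> v i"
  shows "(1/2) ^ to_nat i \<le> dist (\<lambda>i. real (u i)) (\<lambda>i. real (v i))"
proof -
  have "min (dist (real (u i)) (real (v i))) 1 = (1::real)"
    using assms by (simp add: dist_real_def)
  moreover have "(\<Sum>n\<in>{to_nat i}. (1/2) ^ n * min (dist (real (u (from_nat n))) (real (v (from_nat n)))) 1)
      \<le> dist (\<lambda>i. real (u i)) (\<lambda>i. real (v i))"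
    unfolding dist_fun_def
    by (rule sum_le_suminf, rule summable_comparison_test'[of "\<lambda>n. (1/2) ^ n"])
       (auto simp: summable_geometric_iff)
  ultimately show ?thesis by simp
qed

lemma dist_fun_nat_le:
  fixes u v :: "'i::countable \<Rightarrow> nat"
  assumes "\<And>n. n \<le> N \<Longrightarrow> u (from_nat n) = v (from_nat n)"
  shows "dist (\<lambda>i. real (u i)) (\<lambda>i. real (v i)) \<le> (1/2) ^ N"
proof -
  have "{dist (real (u (from_nat n))) (real (v (from_nat n))) |n. n \<le> N} = {0}"
    using assms by (auto intro!: exI[of _ 0])
  then show ?thesis
    using dist_fun_le_dist_first_terms[of "\<lambda>i. real (u i)" "\<lambda>i. real (v i)" N] by simp
qed

lemma fwd_asymptotic_if_eventually_equal:
  fixes u v :: "'i::shift_index \<Rightarrow> nat"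
  assumes "\<And>m. m \<ge> N \<Longrightarrow> u (of_nat m) = v (of_nat m)"
  shows "fwd_asymptotic u v"
proof -
  have "\<forall>\<^sub>F n in sequentially.
          dist (\<lambda>i. real ((shift ^^ n) u i)) (\<lambda>i. real ((shift ^^ n) v i)) < r" if "r > 0" for r
  proof -
    obtain M where M: "(1/2::real) ^ M < r"
      using real_arch_pow_inv[OF \<open>r > 0\<close>, of "1/2"] by auto
    have "\<forall>\<^sub>F n in sequentially. \<forall>k\<in>{..M}. \<exists>m\<ge>N. from_nat k + of_nat n = (of_nat m :: 'i)"
      by (intro eventually_ball_finite ballI eventually_translate_in_nat) auto
    then show ?thesis
    proof (rule eventually_mono)
      fix n
      assume late: "\<forall>k\<in>{..M}. \<exists>m\<ge>N. from_nat k + of_nat n = (of_nat m :: 'i)"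
      have "dist (\<lambda>i. real ((shift ^^ n) u i)) (\<lambda>i. real ((shift ^^ n) v i)) \<le> (1/2) ^ M"
      proof (rule dist_fun_nat_le)
        fix k
        assume "k \<le> M"
        with late obtain m where "m \<ge> N" "from_nat k + of_nat n = (of_nat m :: 'i)" by auto
        then show "(shift ^^ n) u (from_nat k) = (shift ^^ n) v (from_nat k)"
          by (simp add: funpow_shift assms)
      qed
      with M show "dist (\<lambda>i. real ((shift ^^ n) u i)) (\<lambda>i. real ((shift ^^ n) v i)) < r"
        by simp
    qed
  qed
  then show ?thesis
    unfolding fwd_asymptotic_def by (simp add: tendsto_iff)
qed

lemma infinite_differences_if_not_fwd_asymptotic:
  fixes x y :: "'i::shift_index \<Rightarrow> nat"
  assumes "\<not> fwd_asymptotic x y"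
  shows "infinite {n. x (of_nat n) \<noteq> y (of_nat n)}"
proof
  assume "finite {n. x (of_nat n) \<noteq> y (of_nat n)}"
  then obtain N where "\<forall>n\<in>{n. x (of_nat n) \<noteq> y (of_nat n)}. n < N"
    using finite_nat_bounded by blast
  then have "fwd_asymptotic x y"
    by (intro fwd_asymptotic_if_eventually_equal[of N]) force
  with assms show False by simp
qed

lemma frequently_less_if_INF_eq_0:
  fixes f :: "nat \<Rightarrow> real"
  assumes "(INF n. f n) = 0" and "\<And>n. f n > 0" and "e > 0"
  shows "\<exists>\<^sub>F n in sequentially. f n < e"
  unfolding frequently_sequentially
proof
  fix N
  define d where "d = min e (Min (f ` {..N}))"
  have "d > 0"
    using assms by (simp add: d_def Min_gr_iff)
  moreover have "bdd_below (range f)"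
    using assms(2) by (intro bdd_belowI[of _ 0]) (auto intro: less_imp_le)
  ultimately obtain n where n: "f n < d"
    using assms(1) cINF_less_iff[of UNIV f d] by auto
  have "n > N"
  proof (rule ccontr)
    assume "\<not> n > N"
    then have "Min (f ` {..N}) \<le> f n" by (intro Min_le) auto
    moreover have "d \<le> Min (f ` {..N})"
      unfolding d_def by (rule min.cobounded2)
    ultimately show False
      using n by linarith
  qed
  moreover have "d \<le> e"
    unfolding d_def by (rule min.cobounded1)
  ultimately show "\<exists>n\<ge>N. f n < e"
    using n by (intro exI[of _ n]) auto
qed

lemma fwd_proximal_frequently_agree:
  fixes x y :: "'i::shift_index \<Rightarrow> nat"
  assumes "fwd_proximal x y" and "\<And>n. (shift ^^ n) x \<noteq> (shift ^^ n) y"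
  shows "\<exists>\<^sub>F n in sequentially. \<forall>j\<le>k. x (of_nat (n + j)) = y (of_nat (n + j))"
proof -
  define e where "e = Min ((\<lambda>j. (1/2::real) ^ to_nat (of_nat j :: 'i)) ` {..k})"
  have "e > 0"
    by (simp add: e_def Min_gr_iff)
  have "dist (\<lambda>i. real ((shift ^^ n) x i)) (\<lambda>i. real ((shift ^^ n) y i)) > 0" for n
    using assms(2)[of n] by (simp add: fun_eq_iff)
  with assms(1) \<open>e > 0\<close> have "\<exists>\<^sub>F n in sequentially.
      dist (\<lambda>i. real ((shift ^^ n) x i)) (\<lambda>i. real ((shift ^^ n) y i)) < e"
    by (intro frequently_less_if_INF_eq_0) (auto simp: fwd_proximal_def)
  then show ?thesis
  proof (rule frequently_elim1)
    fix n
    assume close: "dist (\<lambda>i. real ((shift ^^ n) x i)) (\<lambda>i. real ((shift ^^ n) y i)) < e"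
    show "\<forall>j\<le>k. x (of_nat (n + j)) = y (of_nat (n + j))"
    proof (intro allI impI)
      fix j
      assume "j \<le> k"
      then have "e \<le> (1/2) ^ to_nat (of_nat j :: 'i)"
        unfolding e_def by (intro Min_le) auto
      with close have "(shift ^^ n) x (of_nat j) = (shift ^^ n) y (of_nat j)"
        using dist_fun_nat_ge[of "(shift ^^ n) x" "of_nat j" "(shift ^^ n) y"] by linarith
      then show "x (of_nat (n + j)) = y (of_nat (n + j))"
        by (simp add: funpow_shift add.commute)
    qed
  qed
qed

lemma last_point_before_gap:
  fixes P :: "nat \<Rightarrow> bool"
  assumes "infinite {n. P n}" and "\<exists>\<^sub>F n in sequentially. \<forall>j\<le>k. \<not> P (n + j)"
  shows "\<exists>m\<ge>k. P m \<and> (\<forall>j. 1 \<le> j \<and> j \<le> k \<longrightarrow> \<not> P (m + j))"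
proof -
  obtain d where d: "P d" "d \<ge> k"
    using assms(1) unfolding infinite_nat_iff_unbounded_le by auto
  obtain n where n: "n \<ge> Suc d" "\<forall>j\<le>k. \<not> P (n + j)"
    using assms(2) unfolding frequently_sequentially by blast
  define m where "m = Max {i. P i \<and> i < n}"
  have fin: "finite {i. P i \<and> i < n}" by simp
  have d_in: "d \<in> {i. P i \<and> i < n}"
    using d n by simp
  have "m \<in> {i. P i \<and> i < n}"
    unfolding m_def using fin d_in by (intro Max_in) auto
  moreover have "d \<le> m"
    unfolding m_def using fin d_in by (rule Max_ge)
  ultimately have m: "P m" "m < n" "m \<ge> k"
    using d by auto
  have "\<not> P (m + j)" if "1 \<le> j" "j \<le> k" for j
  proof (cases "m + j < n")
    case True
    show ?thesis
    proof
      assume "P (m + j)"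
      with True have "m + j \<in> {i. P i \<and> i < n}" by simp
      with fin have "m + j \<le> m" unfolding m_def by (rule Max_ge)
      with \<open>1 \<le> j\<close> show False by simp
    qed
  next
    case False
    then obtain i where i: "m + j = n + i"
      by (metis le_add_diff_inverse not_less)
    with m that have "i \<le> k" by linarith
    with i n(2) show ?thesis by simp
  qed
  with m show ?thesis by blast
qed

lemma fwd_li_yorke_last_difference_before_agreement:
  fixes x y :: "'i::shift_index \<Rightarrow> nat"
  assumes "fwd_li_yorke x y"
  shows "\<exists>m\<ge>k. x (of_nat m) \<noteq> y (of_nat m) \<and>
           (\<forall>j. 1 \<le> j \<and> j \<le> k \<longrightarrow> x (of_nat (m + j)) = y (of_nat (m + j)))"
proof -
  let ?D = "{n. x (of_nat n) \<noteq> y (of_nat n)}"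
  have D: "infinite ?D"
    using assms by (intro infinite_differences_if_not_fwd_asymptotic) (simp add: fwd_li_yorke_def)
  have "(shift ^^ n) x \<noteq> (shift ^^ n) y" for n
  proof -
    obtain d where "d \<in> ?D" "d \<ge> n"
      using D unfolding infinite_nat_iff_unbounded_le by auto
    then have "(shift ^^ n) x (of_nat (d - n)) \<noteq> (shift ^^ n) y (of_nat (d - n))"
      by (simp add: funpow_shift flip: of_nat_add)
    then show ?thesis by fastforce
  qed
  with assms have "\<exists>\<^sub>F n in sequentially. \<forall>j\<le>k. x (of_nat (n + j)) = y (of_nat (n + j))"
    by (intro fwd_proximal_frequently_agree) (simp_all add: fwd_li_yorke_def)
  with D show ?thesis
    using last_point_before_gap[of "\<lambda>n. x (of_nat n) \<noteq> y (of_nat n)" k] by simp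
qed

lemma funpow_shift_in_subshift:
  assumes "subshift A X" and "z \<in> X"
  shows "(shift ^^ n) z \<in> X"
  using assms by (induction n) (auto simp: subshift_def)

lemma subshift_compact_space:
  fixes X :: "('i::{plus,one} \<Rightarrow> nat) set"
  assumes "subshift A X"
  shows "compact_space (product_topology (\<lambda>_. top_of_set X) X)"
proof -
  have A: "finite A" and sub: "X \<subseteq> {x. \<forall>n. x n \<in> A}" and "closed X"
    using assms unfolding subshift_def by auto
  have "compactin (product_topology (\<lambda>_. euclidean) UNIV) (PiE UNIV (\<lambda>_::'i. A))"
    using A by (subst compactin_PiE) (auto intro: finite_imp_compact)
  moreover have "PiE UNIV (\<lambda>_::'i. A) = {x. \<forall>n. x n \<in> A}"
    by (auto simp: PiE_def Pi_def)
  ultimately have "compact {x::'i \<Rightarrow> nat. \<forall>n. x n \<in> A}"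
    by (simp add: euclidean_product_topology)
  with \<open>closed X\<close> sub have "compact X"
    by (metis compact_Int_closed inf.absorb_iff2)
  then have "compact_space (top_of_set X)"
    by (simp add: compact_space_subtopology)
  then show ?thesis
    by (simp add: compact_space_product_topology)
qed

lemma continuous_map_eval_coordinate:
  fixes X :: "('i \<Rightarrow> nat) set"
  assumes "a \<in> X"
  shows "continuous_map (product_topology (\<lambda>_. top_of_set X) X) euclidean (\<lambda>g. g a i)"
proof -
  have "continuous_map (product_topology (\<lambda>_. euclidean) UNIV) euclidean (\<lambda>z::'i \<Rightarrow> nat. z i)"
    by (rule continuous_map_product_projection) simp
  then have "continuous_map euclidean euclidean (\<lambda>z::'i \<Rightarrow> nat. z i)"
    by (simp add: euclidean_product_topology)
  then have coordinate: "continuous_map (top_of_set X) euclidean (\<lambda>z::'i \<Rightarrow> nat. z i)"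
    by (rule continuous_map_from_subtopology)
  have "continuous_map (product_topology (\<lambda>_. top_of_set X) X) (top_of_set X) (\<lambda>g. g a)"
    using assms by (rule continuous_map_product_projection)
  then show ?thesis
    using continuous_map_compose[OF _ coordinate] by (simp add: o_def)
qed

text \<open>Coordinates take values in the discrete space nat, so any relation between two of them
is an open and closed condition.\<close>

lemma closure_of_coordinate_relation:
  fixes X :: "('i \<Rightarrow> nat) set"
  assumes "a \<in> X" "b \<in> X" and "\<And>s. s \<in> S \<Longrightarrow> P (s a i) (s b j)"
    and "g \<in> product_topology (\<lambda>_. top_of_set X) X closure_of S"
  shows "P (g a i) (g b j)"
proof (rule ccontr)
  let ?T = "product_topology (\<lambda>_. top_of_set X) X"
  assume "\<not> P (g a i) (g b j)"
  define U where "U = {h \<in> topspace ?T. h a i \<in> {g a i}} \<inter> {h \<in> topspace ?T. h b j \<in> {g b j}}"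
  have "openin ?T U"
    unfolding U_def
    by (intro openin_Int openin_continuous_map_preimage[OF continuous_map_eval_coordinate] assms)
       (auto simp: open_discrete)
  moreover have "g \<in> U"
    using assms(4) unfolding U_def in_closure_of by auto
  ultimately obtain s where "s \<in> S" "s \<in> U"
    using assms(4) unfolding in_closure_of by blast
  with assms(3)[OF \<open>s \<in> S\<close>] \<open>\<not> P (g a i) (g b j)\<close> show False
    unfolding U_def by auto
qed

definition shift_maps :: "('i::{plus,one} \<Rightarrow> nat) set \<Rightarrow> nat set \<Rightarrow> (('i \<Rightarrow> nat) \<Rightarrow> ('i \<Rightarrow> nat)) set" where
  "shift_maps X T = (\<lambda>n. restrict (shift ^^ n) X) ` T"

lemma closure_of_shift_maps_subset_enveloping_semigroup:
  "product_topology (\<lambda>_. top_of_set X) X closure_of shift_maps X T \<subseteq> enveloping_semigroup X"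
  unfolding enveloping_semigroup_def shift_maps_def by (rule closure_of_mono) auto

lemma closure_of_maps_image_subset:
  assumes "f \<in> product_topology (\<lambda>_. top_of_set X) X closure_of S"
  shows "f ` X \<subseteq> X"
proof -
  have "f \<in> topspace (product_topology (\<lambda>_. top_of_set X) X)"
    using closure_of_subset_topspace assms by (rule subsetD)
  then show ?thesis
    by (auto simp: PiE_iff)
qed

lemma subshift_cluster_point:
  fixes X :: "('i::{plus,one} \<Rightarrow> nat) set" and t :: "nat \<Rightarrow> nat"
  assumes "subshift A X"
  obtains f where "\<And>K. f \<in> product_topology (\<lambda>_. top_of_set X) X closure_of shift_maps X (t ` {K..})"
proof -
  let ?T = "product_topology (\<lambda>_. top_of_set X) X"
  define C where "C K = ?T closure_of shift_maps X (t ` {K..})" for K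
  have "(\<Inter>K. C K) \<noteq> {}"
  proof (rule compact_space_imp_nest[OF subshift_compact_space[OF assms]])
    show "closedin ?T (C K)" for K
      unfolding C_def by simp
    show "C K \<noteq> {}" for K
    proof -
      have "restrict (shift ^^ t K) X \<in> shift_maps X (t ` {K..})"
        unfolding shift_maps_def by (rule image_eqI[where x = "t K"]) auto
      moreover have "restrict (shift ^^ t K) X \<in> topspace ?T"
        using funpow_shift_in_subshift[OF assms] by (simp add: restrict_PiE_iff)
      ultimately have "restrict (shift ^^ t K) X \<in> C K"
        unfolding C_def using closure_of_subset_Int[of ?T "shift_maps X (t ` {K..})"] by blast
      then show ?thesis by blast
    qed
    show "decseq C"
      unfolding decseq_def C_def shift_maps_def by (intro allI impI closure_of_mono) auto
  qed
  with that show ?thesis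
    unfolding C_def by blast
qed

lemma cluster_point_identifies_eventually_equal:
  fixes X :: "('i::shift_index \<Rightarrow> nat) set" and t :: "nat \<Rightarrow> nat"
  assumes "\<And>k. t k \<ge> k"
    and f: "\<And>K. f \<in> product_topology (\<lambda>_. top_of_set X) X closure_of shift_maps X (t ` {K..})"
    and "u \<in> X" "v \<in> X" and "\<And>m. m \<ge> N \<Longrightarrow> u (of_nat m) = v (of_nat m)"
  shows "f u = f v"
proof
  fix i :: 'i
  obtain K where K: "\<And>n. n \<ge> K \<Longrightarrow> \<exists>m\<ge>N. i + of_nat n = (of_nat m :: 'i)"
    using eventually_translate_in_nat[of N i] unfolding eventually_sequentially by blast
  show "f u i = f v i"
  proof (rule closure_of_coordinate_relation[OF \<open>u \<in> X\<close> \<open>v \<in> X\<close> _ f[of K], where P = "(=)"])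
    fix s
    assume "s \<in> shift_maps X (t ` {K..})"
    then obtain k where s: "s = restrict (shift ^^ t k) X" and "k \<ge> K"
      unfolding shift_maps_def by auto
    have "t k \<ge> K"
      using assms(1)[of k] \<open>k \<ge> K\<close> by linarith
    then obtain m where "m \<ge> N" "i + of_nat (t k) = (of_nat m :: 'i)"
      using K by blast
    with s assms(3-5) show "s u i = s v i"
      by (simp add: funpow_shift)
  qed
qed

lemma not_completely_regular_map_if_collapse:
  assumes "f ` X \<subseteq> X" and "x \<in> X" "y \<in> X" and "f x \<noteq> f y" and "f (f x) = f (f y)"
  shows "\<not> completely_regular_map X f"
proof
  assume "completely_regular_map X f"
  then obtain g where g: "compose X f (compose X g f) = f" "compose X f g = compose X g f"
    unfolding completely_regular_map_def by blast
  have fgf: "f (g (f z)) = f z" if "z \<in> X" for z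
    using fun_cong[OF g(1), of z] that assms(1) by (auto simp: compose_def)
  have fg: "f (g w) = g (f w)" if "w \<in> X" for w
    using fun_cong[OF g(2), of w] that by (simp add: compose_def)
  have "f x = g (f (f x))"
    using fgf[OF \<open>x \<in> X\<close>] fg assms(1,2) by auto
  also have "\<dots> = f y"
    using fgf[OF \<open>y \<in> X\<close>] fg assms(1,3,5) by auto
  finally show False
    using assms(4) by contradiction
qed

lemma fwd_li_yorke_collapsing_map:
  fixes X :: "('i::shift_index \<Rightarrow> nat) set"
  assumes X: "subshift A X" and "x \<in> X" "y \<in> X" and "fwd_li_yorke x y"
  shows "\<exists>f \<in> enveloping_semigroup X. f x \<noteq> f y \<and> fwd_asymptotic (f x) (f y) \<and>
           \<not> inj_on f (f ` X) \<and> \<not> completely_regular_map X f"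
proof -
  let ?T = "product_topology (\<lambda>_. top_of_set X) X"
  obtain t where t: "\<And>k. t k \<ge> k" "\<And>k. x (of_nat (t k)) \<noteq> y (of_nat (t k))"
    "\<And>k j. 1 \<le> j \<Longrightarrow> j \<le> k \<Longrightarrow> x (of_nat (t k + j)) = y (of_nat (t k + j))"
    using fwd_li_yorke_last_difference_before_agreement[OF assms(4)] by metis
  obtain f where f: "\<And>K. f \<in> ?T closure_of shift_maps X (t ` {K..})"
    using subshift_cluster_point[OF X] by blast
  have E: "f \<in> enveloping_semigroup X"
    using closure_of_shift_maps_subset_enveloping_semigroup f[of 0] by (rule subsetD)
  have fX: "f ` X \<subseteq> X"
    using f[of 0] by (rule closure_of_maps_image_subset)
  have "f x 0 \<noteq> f y 0"
    by (rule closure_of_coordinate_relation[OF assms(2,3) _ f[of 0], where P = "(\<noteq>)"])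
       (use t(2) assms(2,3) in \<open>auto simp: shift_maps_def funpow_shift\<close>)
  then have neq: "f x \<noteq> f y" by auto
  have agree: "f x (of_nat j) = f y (of_nat j)" if "j \<ge> 1" for j
    by (rule closure_of_coordinate_relation[OF assms(2,3) _ f[of j], where P = "(=)"])
       (use t(3) assms(2,3) that in \<open>auto simp: shift_maps_def funpow_shift add.commute\<close>)
  have collapse: "f (f x) = f (f y)"
  proof (rule cluster_point_identifies_eventually_equal[OF t(1) f])
    show "f x \<in> X" "f y \<in> X"
      using fX assms(2,3) by auto
    show "\<And>m. 1 \<le> m \<Longrightarrow> f x (of_nat m) = f y (of_nat m)"
      by (rule agree)
  qed
  have "\<not> inj_on f (f ` X)"
    using neq collapse assms(2,3) by (auto dest: inj_onD)
  moreover have "fwd_asymptotic (f x) (f y)"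
    by (rule fwd_asymptotic_if_eventually_equal[where N = 1], rule agree)
  moreover have "\<not> completely_regular_map X f"
    by (rule not_completely_regular_map_if_collapse[OF fX assms(2,3) neq collapse])
  ultimately show ?thesis
    using E neq by blast
qed

theorem lemma4p10:
  shows "(\<forall>(A::nat set) (X::(nat \<Rightarrow> nat) set) x y.
           subshift A X \<and> x \<in> X \<and> y \<in> X \<and> fwd_li_yorke x y \<longrightarrow>
           (\<exists>f \<in> enveloping_semigroup X. f x \<noteq> f y \<and> fwd_asymptotic (f x) (f y) \<and>
              \<not> inj_on f (f ` X) \<and> \<not> completely_regular_map X f)) \<and>
         (\<forall>(A::nat set) (X::(int \<Rightarrow> nat) set) x y.
           subshift A X \<and> x \<in> X \<and> y \<in> X \<and> fwd_li_yorke x y \<longrightarrow>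
           (\<exists>f \<in> enveloping_semigroup X. f x \<noteq> f y \<and> fwd_asymptotic (f x) (f y) \<and>
              \<not> inj_on f (f ` X) \<and> \<not> completely_regular_map X f))"
  by (intro conjI allI impI; elim conjE; rule fwd_li_yorke_collapsing_map)

end
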